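(* Let $\Pi=(t_k)_{k\in\mathbb{Z}}$ be a sampling sequence with constants $0<\delta\le\Delta$, let $\chi$ be a kernel satisfying $(\chi1)$–$(\chi4)$ whose function $L$ in $(\chi3)$ satisfies $(L1)$, $(L2)$ and has compact support. Let $\varphi$ be a convex $\varphi$-function satisfying condition (H) with a convex $\varphi$-function $\eta$, and let $f\in L^{\varphi+\eta}(\mathbb{R})$. Then for every $0<\alpha<1$ there exist constants $\mu>0$, $\lambda_0>0$ and $\lambda>0$ such that, with $\omega(f,\delta')_\eta:=\sup_{|t|\le\delta'} I^{\eta}[\lambda(f(\cdot+t)-f(\cdot))]$, for every sufficiently large $w>0$, $$I^{\varphi}[\mu(S_wf-f)]\le\frac{\|L\|_1}{3\delta\, m_{0,\Pi}(L)}\,\omega(f,1/w^{\alpha})_\eta+\frac{\Delta}{3\delta}\,\omega(f,\Delta/w)_\eta+\frac{I^{\varphi}[\lambda_0 f]}{3}\,w^{-\theta_0},$$ where $\theta_0>0$ is the constant of condition $(\chi4)$.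
   Context: A $\varphi$-function is a continuous non-decreasing $\varphi:[0,\infty)\to[0,\infty)$ with $\varphi(0)=0$, $\varphi(u)>0$ for $u>0$, and $\varphi(u)\to+\infty$ as $u\to+\infty$. For a $\varphi$-function $\varphi$ and measurable $f$, $I^{\varphi}[f]:=\int_{\mathbb{R}}\varphi(|f(x)|)\,dx$; $L^{\varphi}(\mathbb{R})=\{f: I^{\varphi}[\lambda f]<\infty\text{ for some }\lambda>0\}$; $L^{\varphi+\eta}(\mathbb{R})$ is the Orlicz space generated by $\varphi+\eta$. A sampling sequence $\Pi=(t_k)$: strictly increasing reals, $t_k\to\pm\infty$ as $k\to\pm\infty$, with $\delta\le\Delta_k:=t_{k+1}-t_k\le\Delta$ for constants $0<\delta\le\Delta$. A kernel is $\chi:\mathbb{R}^2\to\mathbb{R}$ with: $(\chi1)$ $k\mapsto\chi(wx-t_k,u)\in\ell^1(\mathbb{Z})$ for all $x,u$ and $w>0$; $(\chi2)$ $\chi(x,0)=0$; $(\chi3)$ there exist measurable $L:\mathbb{R}\to[0,\infty)$ and a $\varphi$-function $\psi$ with $|\chi(x,u)-\chi(x,v)|\le L(x)\psi(|u-v|)$; $(\chi4)$ there is $\theta_0>0$ with $\sup_{u\ne0}\left|\frac1u\sum_k\chi(wx-t_k,u)-1\right|=\mathcal{O}(w^{-\theta_0})$ as $w\to+\infty$ uniformly in $x$. $(L1)$: $L\in L^1(\mathbb{R})$, bounded near $0$; $(L2)$: some $\beta_0>0$ with $\sup_{u}\sum_kL(u-t_k)|u-t_k|^{\beta_0}<\infty$.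 $m_{0,\Pi}(L):=\sup_u\sum_kL(u-t_k)<\infty$. Condition (H): there is a $\varphi$-function $\eta$ such that for every $\lambda\in(0,1)$ there is $C_\lambda\in(0,1)$ with $\varphi(C_\lambda\psi(u))\le\eta(\lambda u)$ for all $u\ge0$. Operators: $(S_wf)(x):=\sum_k\chi\!\left(wx-t_k,\frac{w}{\Delta_k}\int_{t_k/w}^{t_{k+1}/w}f(u)\,du\right)$ for locally integrable $f$ with convergent series. *)

theory Defs
  imports "HOL-Analysis.Analysis"
begin

definition phi_function :: "(real \<Rightarrow> real) \<Rightarrow> bool" where
  "phi_function \<phi> \<longleftrightarrow> continuous_on {0..} \<phi> \<and> mono_on {0..} \<phi> \<and> \<phi> 0 = 0
     \<and> (\<forall>u>0. \<phi> u > 0) \<and> filterlim \<phi> at_top at_top"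

definition modular :: "(real \<Rightarrow> real) \<Rightarrow> (real \<Rightarrow> real) \<Rightarrow> ennreal" where
  "modular \<phi> f = (\<integral>\<^sup>+ x. ennreal (\<phi> \<bar>f x\<bar>) \<partial>lebesgue)"

definition orlicz_space :: "(real \<Rightarrow> real) \<Rightarrow> (real \<Rightarrow> real) set" where
  "orlicz_space \<phi> = {f. f \<in> borel_measurable lebesgue \<and>
      (\<exists>c>0. modular \<phi> (\<lambda>x. c * f x) < \<infinity>)}"

definition sampling_sequence :: "(int \<Rightarrow> real) \<Rightarrow> real \<Rightarrow> real \<Rightarrow> bool" where
  "sampling_sequence t \<delta> \<Delta> \<longleftrightarrow> strict_mono t \<and> filterlim t at_top at_top
     \<and> filterlim t at_bot at_bot \<and> 0 < \<delta> \<and> \<delta> \<le> \<Delta>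
     \<and> (\<forall>k. \<delta> \<le> t (k+1) - t k \<and> t (k+1) - t k \<le> \<Delta>)"

text \<open>Kernel conditions (chi1)-(chi4), with L, psi from (chi3) and theta0 from (chi4).\<close>
definition kernel_cond :: "(int \<Rightarrow> real) \<Rightarrow> (real \<Rightarrow> real \<Rightarrow> real) \<Rightarrow> (real \<Rightarrow> real)
     \<Rightarrow> (real \<Rightarrow> real) \<Rightarrow> real \<Rightarrow> bool" where
  "kernel_cond t K L \<psi> \<theta>\<^sub>0 \<longleftrightarrow>
     (\<forall>x u w. w > 0 \<longrightarrow> (\<lambda>k. \<bar>K (w * x - t k) u\<bar>) summable_on UNIV)
   \<and> (\<forall>x. K x 0 = 0)
   \<and> L \<in> borel_measurable lebesgue \<and> (\<forall>x. L x \<ge> 0) \<and> phi_function \<psi>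
   \<and> (\<forall>x u v. \<bar>K x u - K x v\<bar> \<le> L x * \<psi> \<bar>u - v\<bar>)
   \<and> \<theta>\<^sub>0 > 0
   \<and> (\<exists>C W. \<forall>w\<ge>W. \<forall>x u. u \<noteq> 0 \<longrightarrow>
          \<bar>(1 / u) * (\<Sum>\<^sub>\<infinity>k. K (w * x - t k) u) - 1\<bar> \<le> C * w powr (- \<theta>\<^sub>0))"

definition L1_cond :: "(real \<Rightarrow> real) \<Rightarrow> bool" where
  "L1_cond L \<longleftrightarrow> integrable lebesgue L \<and> (\<exists>r>0. \<exists>M. \<forall>x. \<bar>x\<bar> < r \<longrightarrow> L x \<le> M)"

definition L2_cond :: "(int \<Rightarrow> real) \<Rightarrow> (real \<Rightarrow> real) \<Rightarrow> bool" where
  "L2_cond t L \<longleftrightarrow> (\<exists>\<beta>\<^sub>0>0. \<exists>M. \<forall>u.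
      (\<lambda>k. L (u - t k) * \<bar>u - t k\<bar> powr \<beta>\<^sub>0) summable_on UNIV
      \<and> (\<Sum>\<^sub>\<infinity>k. L (u - t k) * \<bar>u - t k\<bar> powr \<beta>\<^sub>0) \<le> M)"

definition m0_finite :: "(int \<Rightarrow> real) \<Rightarrow> (real \<Rightarrow> real) \<Rightarrow> bool" where
  "m0_finite t L \<longleftrightarrow> (\<exists>M. \<forall>u. (\<lambda>k. L (u - t k)) summable_on UNIV
      \<and> (\<Sum>\<^sub>\<infinity>k. L (u - t k)) \<le> M)"

definition m0 :: "(int \<Rightarrow> real) \<Rightarrow> (real \<Rightarrow> real) \<Rightarrow> real" where
  "m0 t L = (SUP u. (\<Sum>\<^sub>\<infinity>k. L (u - t k)))"

definition condH :: "(real \<Rightarrow> real) \<Rightarrow> (real \<Rightarrow> real) \<Rightarrow> (real \<Rightarrow> real) \<Rightarrow> bool" where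
  "condH \<phi> \<psi> \<eta> \<longleftrightarrow> phi_function \<eta> \<and>
     (\<forall>c. 0 < c \<and> c < 1 \<longrightarrow> (\<exists>C. 0 < C \<and> C < 1 \<and>
        (\<forall>u\<ge>0. \<phi> (C * \<psi> u) \<le> \<eta> (c * u))))"

definition S_op :: "(int \<Rightarrow> real) \<Rightarrow> (real \<Rightarrow> real \<Rightarrow> real) \<Rightarrow> real
     \<Rightarrow> (real \<Rightarrow> real) \<Rightarrow> real \<Rightarrow> real" where
  "S_op t K w f x = (\<Sum>\<^sub>\<infinity>k. K (w * x - t k)
      ((w / (t (k+1) - t k)) * (LINT u:{t k / w .. t (k+1) / w}|lebesgue. f u)))"

definition modulus :: "(real \<Rightarrow> real) \<Rightarrow> real \<Rightarrow> (real \<Rightarrow> real) \<Rightarrow> real \<Rightarrow> ennreal" where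
  "modulus \<eta> c f d = (SUP s\<in>{-d..d}. modular \<eta> (\<lambda>x. c * (f (x + s) - f x)))"

end

theory Submission
  imports Defs "HOL-Probability.Probability_Measure"
begin

(*
  At every x only the finitely many k with L (w x - t k) \<noteq> 0 contribute to S_w f x, and
  S_w f x - f x splits into three sums: the sample mean of f over the k-th cell against the
  mean of f over [x, x + cell length), that mean against f x, and the defect of (\<chi>4) at the
  value f x.  Convexity of \<phi> bounds \<phi>(\<mu> |S_w f x - f x|) by the average of \<phi>(3 \<mu> |.|) of the
  three sums.  In the first two, (\<chi>3), Jensen's inequality for the weights L (w x - t k) / m
  and condition (H) turn \<phi> of a kernel difference into \<eta> of a difference of means, and
  Jensen's inequality over the cell bounds that by an \<eta>-oscillation of f.  Integrating in x,
  Tonelli's theorem, the support of L and the disjointness of the cells produce the moduli of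
  smoothness for shifts up to R / w \<le> w^-\<alpha> and \<Delta> / w.  The third sum is at most
  C w^-\<theta>\<^sub>0 |f x|, and \<phi> (s v) \<le> s \<phi> v for s \<le> 1.  Replacing f by a Borel representative changes
  none of these quantities.
*)

section \<open>Convex \<open>\<phi>\<close>-functions\<close>

lemma phi_function_nonneg: "phi_function \<phi> \<Longrightarrow> 0 \<le> u \<Longrightarrow> 0 \<le> \<phi> u"
  unfolding phi_function_def by (metis atLeast_iff mono_onD order_refl)

lemma phi_function_mono: "phi_function \<phi> \<Longrightarrow> 0 \<le> a \<Longrightarrow> a \<le> b \<Longrightarrow> \<phi> a \<le> \<phi> b"
  unfolding phi_function_def by (meson atLeast_iff mono_onD order_trans)

lemma continuous_on_phi_function_abs_mult:
  "phi_function \<phi> \<Longrightarrow> continuous_on UNIV (\<lambda>v. \<phi> \<bar>c * v\<bar>)"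
  unfolding phi_function_def
  by (intro continuous_on_compose2[of "{0..}" \<phi> UNIV "\<lambda>v. \<bar>c * v\<bar>"] continuous_intros) auto

lemma convex_on_abs_mult:
  fixes \<eta> :: "real \<Rightarrow> real"
  assumes cvx: "convex_on {0..} \<eta>" and mono: "mono_on {0..} \<eta>"
  shows "convex_on UNIV (\<lambda>v. \<eta> \<bar>c * v\<bar>)"
proof (rule convex_onI)
  fix s x y :: real assume s: "0 < s" "s < 1"
  have "\<bar>c * ((1 - s) * x + s * y)\<bar> = \<bar>(1 - s) * (c * x) + s * (c * y)\<bar>"
    by (simp add: algebra_simps)
  also have "\<dots> \<le> (1 - s) * \<bar>c * x\<bar> + s * \<bar>c * y\<bar>"
    using s abs_triangle_ineq[of "(1 - s) * (c * x)" "s * (c * y)"] by (simp add: abs_mult)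
  finally have "\<bar>c * ((1 - s) * x + s * y)\<bar> \<le> (1 - s) * \<bar>c * x\<bar> + s * \<bar>c * y\<bar>" .
  then have "\<eta> \<bar>c * ((1 - s) * x + s * y)\<bar> \<le> \<eta> ((1 - s) * \<bar>c * x\<bar> + s * \<bar>c * y\<bar>)"
    using s by (intro mono_onD[OF mono]) auto
  also have "\<dots> \<le> (1 - s) * \<eta> \<bar>c * x\<bar> + s * \<eta> \<bar>c * y\<bar>"
    using convex_onD[OF cvx, of s] s by simp
  finally show "\<eta> \<bar>c * ((1 - s) *\<^sub>R x + s *\<^sub>R y)\<bar> \<le> (1 - s) * \<eta> \<bar>c * x\<bar> + s * \<eta> \<bar>c * y\<bar>"
    by simp
qed (simp add: convex_UNIV)

lemma convex_on_scale_le: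
  fixes \<phi> :: "real \<Rightarrow> real"
  assumes "convex_on {0..} \<phi>" "\<phi> 0 = 0" "0 \<le> s" "s \<le> 1" "0 \<le> v"
  shows "\<phi> (s * v) \<le> s * \<phi> v"
  using convex_onD[OF assms(1), of s 0 v] assms(2-) by simp

lemma convex_on_mean3_le:
  fixes \<phi> :: "real \<Rightarrow> real"
  assumes cvx: "convex_on {0..} \<phi>" and "0 \<le> a" "0 \<le> b" "0 \<le> c"
  shows "\<phi> ((a + b + c) / 3) \<le> (\<phi> a + \<phi> b + \<phi> c) / 3"
proof -
  have mid: "\<phi> ((b + c) / 2) \<le> (\<phi> b + \<phi> c) / 2"
    using convex_onD[OF cvx, of "1/2" b c] assms by (simp add: field_simps)
  have "\<phi> ((a + b + c) / 3) = \<phi> ((1 - 2/3) * a + (2/3) * ((b + c) / 2))"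
    by (rule arg_cong[where f = \<phi>]) (simp add: field_simps)
  also have "\<dots> \<le> (1 - 2/3) * \<phi> a + (2/3) * \<phi> ((b + c) / 2)"
    using convex_onD[OF cvx, of "2/3" a "(b + c) / 2"] assms by simp
  finally show ?thesis using mid by (simp add: field_simps)
qed

lemma phi_abs_mult_sum3_le:
  assumes p\<phi>: "phi_function \<phi>" and cvx: "convex_on {0..} \<phi>" and "0 < \<mu>"
  shows "\<phi> \<bar>\<mu> * (a + b + c)\<bar> \<le> (\<phi> (3 * \<mu> * \<bar>a\<bar>) + \<phi> (3 * \<mu> * \<bar>b\<bar>) + \<phi> (3 * \<mu> * \<bar>c\<bar>)) / 3"
proof -
  have "\<bar>\<mu> * (a + b + c)\<bar> \<le> (3 * \<mu> * \<bar>a\<bar> + 3 * \<mu> * \<bar>b\<bar> + 3 * \<mu> * \<bar>c\<bar>) / 3"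
    using \<open>0 < \<mu>\<close> abs_triangle_ineq[of "a + b" c] abs_triangle_ineq[of a b]
    by (simp add: abs_mult distrib_left[symmetric])
  then have "\<phi> \<bar>\<mu> * (a + b + c)\<bar> \<le> \<phi> ((3 * \<mu> * \<bar>a\<bar> + 3 * \<mu> * \<bar>b\<bar> + 3 * \<mu> * \<bar>c\<bar>) / 3)"
    by (intro phi_function_mono[OF p\<phi>]) auto
  also have "\<dots> \<le> (\<phi> (3 * \<mu> * \<bar>a\<bar>) + \<phi> (3 * \<mu> * \<bar>b\<bar>) + \<phi> (3 * \<mu> * \<bar>c\<bar>)) / 3"
    using \<open>0 < \<mu>\<close> by (intro convex_on_mean3_le[OF cvx]) auto
  finally show ?thesis .
qed

text \<open>The mass missing from the weights is put on the point \<open>0\<close>, where \<open>\<phi>\<close> vanishes.\<close>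

lemma convex_on_weighted_sum_le:
  fixes p y :: "'a \<Rightarrow> real" and \<phi> :: "real \<Rightarrow> real"
  assumes cvx: "convex_on {0..} \<phi>" and \<phi>0: "\<phi> 0 = 0" and F: "finite F"
    and p: "\<And>k. k \<in> F \<Longrightarrow> 0 \<le> p k" and y: "\<And>k. k \<in> F \<Longrightarrow> 0 \<le> y k"
    and mass: "sum p F \<le> m"
  shows "\<phi> (\<Sum>k\<in>F. p k * y k) \<le> (\<Sum>k\<in>F. p k / m * \<phi> (m * y k))"
proof (cases "sum p F = 0")
  case True
  then have "\<forall>k\<in>F. p k = 0" using sum_nonneg_eq_0_iff[OF F] p by blast
  then show ?thesis using \<phi>0 by simp
next
  case False
  define P where "P = sum p F"
  have P: "0 < P" using False sum_nonneg[of F p] p unfolding P_def by force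
  then have m: "0 < m" using mass unfolding P_def by linarith
  have "F \<noteq> {}" using False by auto
  have "(\<Sum>k\<in>F. p k * y k) = P / m * (\<Sum>k\<in>F. p k / P * (m * y k))"
    using P m by (simp add: sum_distrib_left field_simps)
  also have "\<phi> \<dots> \<le> P / m * \<phi> (\<Sum>k\<in>F. p k / P * (m * y k))"
    using P m mass p y unfolding P_def
    by (intro convex_on_scale_le[OF cvx \<phi>0]) (auto intro!: sum_nonneg)
  also have "\<phi> (\<Sum>k\<in>F. p k / P * (m * y k)) \<le> (\<Sum>k\<in>F. p k / P * \<phi> (m * y k))"
    using convex_on_sum[OF F \<open>F \<noteq> {}\<close> cvx, of "\<lambda>k. p k / P" "\<lambda>k. m * y k"] P m p y
    by (auto simp: P_def sum_divide_distrib[symmetric])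
  then have "P / m * \<phi> (\<Sum>k\<in>F. p k / P * (m * y k)) \<le> P / m * (\<Sum>k\<in>F. p k / P * \<phi> (m * y k))"
    using P m by (intro mult_left_mono) auto
  also have "\<dots> = (\<Sum>k\<in>F. p k / m * \<phi> (m * y k))"
    using P by (simp add: sum_distrib_left)
  finally show ?thesis .
qed

lemma phi_kernel_sum_diff_le:
  fixes K :: "real \<Rightarrow> real \<Rightarrow> real" and L \<psi> \<phi> \<eta> :: "real \<Rightarrow> real" and z a b :: "'a \<Rightarrow> real"
  assumes F: "finite F"
    and Lip: "\<And>x u v. \<bar>K x u - K x v\<bar> \<le> L x * \<psi> \<bar>u - v\<bar>" and L: "\<And>x. 0 \<le> L x"
    and p\<psi>: "phi_function \<psi>" and p\<phi>: "phi_function \<phi>" and cv\<phi>: "convex_on {0..} \<phi>"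
    and mass: "(\<Sum>k\<in>F. L (z k)) \<le> m"
    and c: "0 < c" "c * m \<le> C"
    and H: "\<And>u. 0 \<le> u \<Longrightarrow> \<phi> (C * \<psi> u) \<le> \<eta> (r * u)"
  shows "\<phi> (c * \<bar>\<Sum>k\<in>F. K (z k) (a k) - K (z k) (b k)\<bar>)
     \<le> (\<Sum>k\<in>F. L (z k) / m * \<eta> (r * \<bar>a k - b k\<bar>))"
proof -
  have m: "0 \<le> m" using mass sum_nonneg[of F "\<lambda>k. L (z k)"] L by (meson order_trans)
  have \<psi>: "0 \<le> \<psi> \<bar>a k - b k\<bar>" for k using phi_function_nonneg[OF p\<psi>] by simp
  have "c * \<bar>\<Sum>k\<in>F. K (z k) (a k) - K (z k) (b k)\<bar> \<le> c * (\<Sum>k\<in>F. L (z k) * \<psi> \<bar>a k - b k\<bar>)"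
    using c order_trans[OF sum_abs sum_mono[OF Lip]] by (intro mult_left_mono) auto
  then have "\<phi> (c * \<bar>\<Sum>k\<in>F. K (z k) (a k) - K (z k) (b k)\<bar>)
      \<le> \<phi> (\<Sum>k\<in>F. L (z k) * (c * \<psi> \<bar>a k - b k\<bar>))"
    using c by (intro phi_function_mono[OF p\<phi>]) (auto simp: sum_distrib_left mult.left_commute)
  also have "\<dots> \<le> (\<Sum>k\<in>F. L (z k) / m * \<phi> (m * (c * \<psi> \<bar>a k - b k\<bar>)))"
    using c \<psi> L p\<phi> by (intro convex_on_weighted_sum_le[OF cv\<phi> _ F _ _ mass]) (auto simp: phi_function_def)
  also have "\<dots> \<le> (\<Sum>k\<in>F. L (z k) / m * \<eta> (r * \<bar>a k - b k\<bar>))"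
  proof (intro sum_mono mult_left_mono)
    fix k
    have "\<phi> (m * (c * \<psi> \<bar>a k - b k\<bar>)) \<le> \<phi> (C * \<psi> \<bar>a k - b k\<bar>)"
      using m c \<psi>[of k] mult_right_mono[OF c(2) \<psi>[of k]]
      by (intro phi_function_mono[OF p\<phi>]) (auto simp: mult_ac)
    also have "\<dots> \<le> \<eta> (r * \<bar>a k - b k\<bar>)" by (rule H) simp
    finally show "\<phi> (m * (c * \<psi> \<bar>a k - b k\<bar>)) \<le> \<eta> (r * \<bar>a k - b k\<bar>)" .
  qed (use L m in auto)
  finally show ?thesis .
qed

lemma convex_phi_function_le_linear:
  assumes pf: "phi_function \<phi>" and cvx: "convex_on {0..} \<phi>" and v: "0 \<le> v"
  shows "v \<le> 1 + \<phi> v / \<phi> 1"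
proof -
  have "\<phi> 1 > 0" using pf by (simp add: phi_function_def)
  show ?thesis
  proof (cases "v \<le> 1")
    case True
    then show ?thesis
      using phi_function_nonneg[OF pf v] \<open>\<phi> 1 > 0\<close> by (simp add: add_increasing2)
  next
    case False
    have "\<phi> ((1 / v) * v) \<le> (1 / v) * \<phi> v"
      using False pf by (intro convex_on_scale_le[OF cvx]) (auto simp: phi_function_def)
    then have "v * \<phi> 1 \<le> \<phi> v" using False by (simp add: field_simps)
    then show ?thesis using \<open>\<phi> 1 > 0\<close> by (simp add: field_simps)
  qed
qed

lemma set_integrable_interval_if_phi_integral_finite:
  fixes f \<phi> :: "real \<Rightarrow> real"
  assumes [measurable]: "f \<in> borel_measurable borel" and c: "0 < c"
    and pf: "phi_function \<phi>" and cvx: "convex_on {0..} \<phi>"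
    and fin: "(\<integral>\<^sup>+x. ennreal (\<phi> \<bar>c * f x\<bar>) \<partial>lborel) < \<infinity>"
  shows "set_integrable lborel {a..b} f"
proof -
  have "\<phi> 1 > 0" using pf by (simp add: phi_function_def)
  have [measurable]: "(\<lambda>v. \<phi> \<bar>c * v\<bar>) \<in> borel_measurable borel"
    by (rule borel_measurable_continuous_onI[OF continuous_on_phi_function_abs_mult[OF pf]])
  have bound: "\<bar>f x\<bar> \<le> (1 / c) * (1 + \<phi> \<bar>c * f x\<bar> / \<phi> 1)" for x
    using convex_phi_function_le_linear[OF pf cvx, of "\<bar>c * f x\<bar>"] c
    by (simp add: abs_mult field_simps)
  have "integrable lborel (\<lambda>x. \<phi> \<bar>c * f x\<bar>)"
    using fin phi_function_nonneg[OF pf] by (intro integrableI_nonneg) auto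
  moreover have "integrable lborel (indicator {a..b} :: real \<Rightarrow> real)"
    by (cases "a \<le> b") auto
  ultimately have "integrable lborel (\<lambda>x. (1 / c) * (indicator {a..b} x + \<phi> \<bar>c * f x\<bar> / \<phi> 1))"
    by (intro integrable_mult_right Bochner_Integration.integrable_add integrable_divide)
  then show ?thesis unfolding set_integrable_def
  proof (rule Bochner_Integration.integrable_bound)
    have "0 \<le> (1 / c) * (\<phi> \<bar>c * f x\<bar> / \<phi> 1)" for x
      using phi_function_nonneg[OF pf] \<open>\<phi> 1 > 0\<close> c by simp
    then show "AE x in lborel. norm (indicator {a..b} x *\<^sub>R f x)
        \<le> norm ((1 / c) * (indicator {a..b} x + \<phi> \<bar>c * f x\<bar> / \<phi> 1))"
      using bound c by (intro AE_I2) (simp add: indicator_def abs_mult distrib_left)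
  qed measurable
qed

lemma jensen_interval_average:
  fixes G q :: "real \<Rightarrow> real"
  assumes l: "0 < l" and G: "set_integrable lborel {0..<l} G"
    and [measurable]: "G \<in> borel_measurable borel"
    and cq: "convex_on UNIV q" and q0: "\<And>v. 0 \<le> q v"
  shows "ennreal (q ((1 / l) * (LINT y:{0..<l}|lborel. G y)))
     \<le> ennreal (1 / l) * (\<integral>\<^sup>+y. indicator {0..<l} y * ennreal (q (G y)) \<partial>lborel)"
proof (cases "(\<integral>\<^sup>+y. indicator {0..<l} y * ennreal (q (G y)) \<partial>lborel) = \<infinity>")
  case True
  then show ?thesis using l by (simp add: ennreal_mult_top)
next
  case False
  have [measurable]: "q \<in> borel_measurable borel"
    using cq by (intro borel_measurable_continuous_onI convex_on_continuous) auto
  define N where "N = density lborel (\<lambda>y. ennreal (indicator {0..<l} y / l))"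
  have "emeasure N (space N) = (\<integral>\<^sup>+y. ennreal (1 / l) * indicator {0..<l} y \<partial>lborel)"
    unfolding N_def by (auto simp: emeasure_density indicator_def intro!: nn_integral_cong)
  also have "\<dots> = 1"
    using l by (simp add: nn_integral_cmult_indicator ennreal_mult'[symmetric])
  finally interpret N: prob_space N by (intro prob_spaceI)
  have ind: "(\<lambda>y. indicator {0..<l} y * ennreal (q (G y))) = (\<lambda>y. ennreal (indicator {0..<l} y * q (G y)))"
    by (auto simp: indicator_def)
  have iq: "integrable lborel (\<lambda>y. indicator {0..<l} y * q (G y))"
    using False q0 by (intro integrableI_nonneg) (auto simp: ind top.not_eq_extremum)
  have iG: "integrable lborel (\<lambda>y. indicator {0..<l} y * G y)"
    using G by (simp add: set_integrable_def)
  have "q (integral\<^sup>L N G) \<le> integral\<^sup>L N (\<lambda>y. q (G y))"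
    using iG iq l
    by (intro N.jensens_inequality[of G UNIV 0 0]) (auto simp: cq N_def integrable_density)
  moreover have "integral\<^sup>L N G = (1 / l) * (LINT y:{0..<l}|lborel. G y)"
    using iG l unfolding N_def by (subst integral_density) (auto simp: set_lebesgue_integral_def)
  moreover have "integral\<^sup>L N (\<lambda>y. q (G y)) = (1 / l) * (\<integral>y. indicator {0..<l} y * q (G y) \<partial>lborel)"
    using iq l unfolding N_def by (subst integral_density) auto
  moreover have "(\<integral>\<^sup>+y. indicator {0..<l} y * ennreal (q (G y)) \<partial>lborel)
      = ennreal (\<integral>y. indicator {0..<l} y * q (G y) \<partial>lborel)"
    unfolding ind using iq q0 by (intro nn_integral_eq_integral) auto
  moreover have "0 \<le> (\<integral>y. indicator {0..<l} y * q (G y) \<partial>lborel)"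
    using q0 by (intro integral_nonneg_AE) auto
  ultimately show ?thesis
    using l by (simp add: ennreal_mult'[symmetric] ennreal_leI)
qed

lemma set_lebesgue_integral_interval_shift:
  fixes f :: "real \<Rightarrow> real"
  assumes [measurable]: "f \<in> borel_measurable borel" and ab: "a \<le> b"
  shows "(LINT u:{a..b}|lebesgue. f u) = (LINT y:{0..<b-a}|lborel. f (a + y))"
proof -
  have "(LINT u:{a..b}|lebesgue. f u) = (LINT u:{a..b}|lborel. f u)"
    unfolding set_lebesgue_integral_def by (rule integral_completion) measurable
  also have "\<dots> = (LINT u:{a..<b}|lborel. f u)"
  proof (rule set_integral_cong_set[symmetric])
    show "AE x in lborel. (x \<in> {a..b}) = (x \<in> {a..<b})"
      using AE_lborel_singleton[of b] by eventually_elim auto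
  qed (auto simp: set_borel_measurable_def)
  also have "\<dots> = (\<integral>y. indicator {a..<b} (a + 1 * y) * f (a + 1 * y) \<partial>lborel)"
    using lborel_integral_real_affine[of 1 "\<lambda>u. indicator {a..<b} u * f u" a]
    by (simp add: set_lebesgue_integral_def)
  also have "\<dots> = (\<integral>y. indicator {0..<b-a} y * f (a + y) \<partial>lborel)"
    by (intro Bochner_Integration.integral_cong) (auto simp: indicator_def)
  finally show ?thesis by (simp add: set_lebesgue_integral_def)
qed

lemma set_integrable_interval_shift:
  fixes f :: "real \<Rightarrow> real"
  assumes "\<And>a b. set_integrable lborel {a..b} f" "0 \<le> l"
  shows "set_integrable lborel {0..<l} (\<lambda>y. f (a + y))"
proof -
  have "set_integrable lborel {a..<a+l} f"
    by (rule set_integrable_subset[OF assms(1)[of a "a+l"]]) auto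
  then have "integrable lborel (\<lambda>y. indicator {a..<a+l} (a + 1 * y) *\<^sub>R f (a + 1 * y))"
    unfolding set_integrable_def by (rule lborel_integrable_real_affine) simp
  also have "(\<lambda>y. indicator {a..<a+l} (a + 1 * y) *\<^sub>R f (a + 1 * y)) = (\<lambda>y. indicator {0..<l} y *\<^sub>R f (a + y))"
    by (auto simp: indicator_def fun_eq_iff)
  finally show ?thesis by (simp add: set_integrable_def)
qed

lemma set_integrable_const_interval:
  fixes a b c :: real
  shows "set_integrable lborel {a..<b} (\<lambda>_. c)"
proof -
  have "integrable lborel (indicator {a..<b} :: real \<Rightarrow> real)"
    by (cases "a \<le> b") auto
  then show ?thesis unfolding set_integrable_def by (rule integrable_scaleR_left)
qed

lemma ennreal_sum_mult:
  assumes "\<And>k. k \<in> F \<Longrightarrow> 0 \<le> g k" "\<And>k. k \<in> F \<Longrightarrow> 0 \<le> h k"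
  shows "ennreal (\<Sum>k\<in>F. g k * h k) = (\<Sum>k\<in>F. ennreal (g k) * ennreal (h k))"
proof -
  have "ennreal (\<Sum>k\<in>F. g k * h k) = (\<Sum>k\<in>F. ennreal (g k * h k))"
    using assms by (subst sum_ennreal) auto
  also have "\<dots> = (\<Sum>k\<in>F. ennreal (g k) * ennreal (h k))"
    using assms by (intro sum.cong refl) (simp add: ennreal_mult')
  finally show ?thesis .
qed

lemma ennreal_mult_mult_assoc:
  "0 \<le> a \<Longrightarrow> 0 \<le> b \<Longrightarrow> ennreal a * (ennreal b * (ennreal c * X)) = ennreal (a * b * c) * X"
  by (simp add: ennreal_mult' mult.assoc)

lemma ennreal_third_mult: "ennreal (1/3) * (ennreal c * X) = X / 3 * ennreal c"
proof -
  have "ennreal (1/3) = 1 / 3" by (metis ennreal_divide_numeral ennreal_1 zero_le_one)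
  then show ?thesis by (metis ennreal_times_divide mult.commute mult.right_neutral)
qed

lemma borel_measurable_nn_integral_count_space_int:
  fixes H :: "int \<Rightarrow> 'a \<Rightarrow> ennreal"
  assumes "\<And>k. H k \<in> borel_measurable M"
  shows "(\<lambda>x. \<integral>\<^sup>+k. H k x \<partial>count_space UNIV) \<in> borel_measurable M"
proof -
  have "bij_betw (from_nat_into (UNIV :: int set)) UNIV UNIV"
    by (rule bij_betw_from_nat_into[OF countableI_type infinite_UNIV_int])
  then have "(\<integral>\<^sup>+k. H k x \<partial>count_space UNIV) = (\<Sum>n. H (from_nat_into UNIV n) x)" for x
    by (simp add: nn_integral_bij_count_space[symmetric] nn_integral_count_space_nat)
  then show ?thesis using assms by simp
qed

section \<open>Sampling sequences\<close>

lemma sampling_sequence_diff_ge: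
  assumes ss: "sampling_sequence t \<delta> \<Delta>" and "i \<le> j"
  shows "\<delta> * of_int (j - i) \<le> t j - t i"
proof -
  have "\<delta> * of_nat n \<le> t (i + int n) - t i" for n
  proof (induction n)
    case (Suc n)
    have "\<delta> \<le> t (i + int n + 1) - t (i + int n)"
      using ss by (simp add: sampling_sequence_def)
    with Suc show ?case by (simp add: algebra_simps)
  qed simp
  from this[of "nat (j - i)"] \<open>i \<le> j\<close> show ?thesis by simp
qed

lemma sampling_sequence_mono:
  "sampling_sequence t \<delta> \<Delta> \<Longrightarrow> i \<le> j \<Longrightarrow> t i \<le> t j"
  using sampling_sequence_diff_ge[of t \<delta> \<Delta> i j]
  by (smt (verit) mult_nonneg_nonneg of_int_nonneg sampling_sequence_def)

lemma sampling_sequence_finite_near: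
  assumes ss: "sampling_sequence t \<delta> \<Delta>"
  shows "finite {k. \<bar>c - t k\<bar> \<le> r}"
proof -
  define N where "N = \<lceil>(\<bar>c - t 0\<bar> + r) / \<delta>\<rceil>"
  have "\<delta> > 0" using ss by (simp add: sampling_sequence_def)
  have "\<bar>k\<bar> \<le> N" if "\<bar>c - t k\<bar> \<le> r" for k
  proof -
    have "\<delta> * \<bar>of_int k\<bar> \<le> \<bar>c - t 0\<bar> + r"
      using sampling_sequence_diff_ge[OF ss, of 0 k] sampling_sequence_diff_ge[OF ss, of k 0] that
      by (cases "0 \<le> k") auto
    then have "\<bar>of_int k\<bar> \<le> (\<bar>c - t 0\<bar> + r) / \<delta>"
      using \<open>\<delta> > 0\<close> by (simp add: field_simps)
    then show ?thesis unfolding N_def by linarith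
  qed
  then have "{k. \<bar>c - t k\<bar> \<le> r} \<subseteq> {-N..N}" by force
  then show ?thesis by (rule finite_subset) simp
qed

lemma sampling_sequence_cell_unique:
  assumes ss: "sampling_sequence t \<delta> \<Delta>" and w: "0 < w"
    and "z \<in> {t k / w ..< t (k+1) / w}" "z \<in> {t k' / w ..< t (k'+1) / w}"
  shows "k = k'"
proof (rule ccontr)
  have mono: "t i / w \<le> t j / w" if "i \<le> j" for i j
    using sampling_sequence_mono[OF ss that] w by (simp add: divide_right_mono)
  assume "k \<noteq> k'"
  then consider "k + 1 \<le> k'" | "k' + 1 \<le> k" by linarith
  then show False
    using assms(3,4) by cases (auto dest: mono)
qed

lemma nn_integral_sampling_cells_le:
  assumes ss: "sampling_sequence t \<delta> \<Delta>" and w: "0 < w"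
  shows "(\<integral>\<^sup>+k. indicator {t k / w ..< t (k+1) / w} z * E \<partial>count_space UNIV) \<le> (E::ennreal)"
proof (cases "\<exists>k0. z \<in> {t k0 / w ..< t (k0+1) / w}")
  case True
  then obtain k0 where k0: "z \<in> {t k0 / w ..< t (k0+1) / w}" by blast
  have "(\<integral>\<^sup>+k. indicator {t k / w ..< t (k+1) / w} z * E \<partial>count_space UNIV)
      = (\<Sum>k\<in>{k0}. indicator {t k / w ..< t (k+1) / w} z * E)"
    using sampling_sequence_cell_unique[OF ss w _ k0] by (intro nn_integral_count_space') (auto split: split_indicator)
  also have "\<dots> = E" using k0 by simp
  finally show ?thesis by simp
qed simp

section \<open>The pointwise estimate\<close>

text \<open>The constants of the hypotheses made explicit: \<open>R\<close> bounds the support of \<open>L\<close>,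
  \<open>m\<close> bounds \<open>m\<^sub>0(L)\<close>, \<open>C\<close> and \<open>W\<close> come from (\<chi>4), and \<open>C\<^sub>H\<close> is the constant
  of (H) for \<open>\<lambda> = 1/2\<close>, which becomes the parameter of the modulus of smoothness.\<close>

locale sampling_kantorovich =
  fixes t :: "int \<Rightarrow> real" and \<delta> \<Delta> \<theta> :: real and K :: "real \<Rightarrow> real \<Rightarrow> real"
    and L \<psi> \<phi> \<eta> f :: "real \<Rightarrow> real" and R C W C\<^sub>H \<mu> m :: real
  assumes ss: "sampling_sequence t \<delta> \<Delta>"
    and Lip: "\<And>x u v. \<bar>K x u - K x v\<bar> \<le> L x * \<psi> \<bar>u - v\<bar>"
    and K0: "\<And>x. K x 0 = 0"
    and L_nonneg: "\<And>x. 0 \<le> L x"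
    and R: "0 < R" and L_support: "\<And>x. R < \<bar>x\<bar> \<Longrightarrow> L x = 0"
    and L_integrable: "integrable lebesgue L"
    and m: "\<And>u F. finite F \<Longrightarrow> (\<Sum>k\<in>F. L (u - t k)) \<le> m"
    and p\<psi>: "phi_function \<psi>"
    and p\<phi>: "phi_function \<phi>" and cv\<phi>: "convex_on {0..} \<phi>"
    and p\<eta>: "phi_function \<eta>" and cv\<eta>: "convex_on {0..} \<eta>"
    and H: "\<And>u. 0 \<le> u \<Longrightarrow> \<phi> (C\<^sub>H * \<psi> u) \<le> \<eta> ((1/2) * u)"
    and \<mu>: "0 < \<mu>" "3 * \<mu> * m \<le> C\<^sub>H"
    and chi4: "\<And>w x u. W \<le> w \<Longrightarrow> u \<noteq> 0 \<Longrightarrow>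
        \<bar>(1 / u) * (\<Sum>\<^sub>\<infinity>k. K (w * x - t k) u) - 1\<bar> \<le> C * w powr (- \<theta>)"
    and C: "0 < C" and \<theta>: "0 < \<theta>"
    and f_borel[measurable]: "f \<in> borel_measurable borel"
    and f_locally_integrable: "\<And>a b. set_integrable lborel {a..b} f"

begin

lemma delta_pos: "0 < \<delta>" and cell_ge: "\<delta> \<le> t (k+1) - t k" and cell_le: "t (k+1) - t k \<le> \<Delta>"
  using ss by (auto simp: sampling_sequence_def)

lemma m_nonneg: "0 \<le> m"
  using m[of "{}"] by simp

lemma borel_measurable_eta_abs_mult[measurable (raw)]:
  "g \<in> borel_measurable M \<Longrightarrow> (\<lambda>x. \<eta> \<bar>c * g x\<bar>) \<in> borel_measurable M"
  using measurable_compose[OF _ borel_measurable_continuous_onI[OF continuous_on_phi_function_abs_mult[OF p\<eta>]]] .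

lemma borel_measurable_phi_abs_mult[measurable (raw)]:
  "g \<in> borel_measurable M \<Longrightarrow> (\<lambda>x. \<phi> \<bar>c * g x\<bar>) \<in> borel_measurable M"
  using measurable_compose[OF _ borel_measurable_continuous_onI[OF continuous_on_phi_function_abs_mult[OF p\<phi>]]] .

definition cell_length :: "real \<Rightarrow> int \<Rightarrow> real" where
  "cell_length w k = (t (k+1) - t k) / w"

definition local_mean :: "real \<Rightarrow> int \<Rightarrow> real \<Rightarrow> real" where
  "local_mean w k x = (1 / cell_length w k) * (LINT y:{0..<cell_length w k}|lborel. f (x + y))"

definition near :: "real \<Rightarrow> real \<Rightarrow> int set" where
  "near w x = {k. \<bar>w * x - t k\<bar> \<le> R}"

definition cell_oscillation :: "real \<Rightarrow> int \<Rightarrow> real \<Rightarrow> ennreal" where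
  "cell_oscillation w k x = (\<integral>\<^sup>+y. indicator {0..<cell_length w k} y
      * ennreal (\<eta> \<bar>(1/2) * (f (t k / w + y) - f (x + y))\<bar>) \<partial>lborel)"

definition forward_oscillation :: "real \<Rightarrow> real \<Rightarrow> ennreal" where
  "forward_oscillation d x = (\<integral>\<^sup>+y. indicator {0..d} y * ennreal (\<eta> \<bar>(1/2) * (f (x + y) - f x)\<bar>) \<partial>lborel)"

lemma cell_length_pos: "0 < w \<Longrightarrow> 0 < cell_length w k"
  using cell_ge[of k] delta_pos by (simp add: cell_length_def)

lemma cell_length_le: "0 < w \<Longrightarrow> cell_length w k \<le> \<Delta> / w"
  using cell_le[of k] by (simp add: cell_length_def divide_right_mono)

lemma inverse_cell_length_le: "0 < w \<Longrightarrow> 1 / cell_length w k \<le> w / \<delta>"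
  using cell_ge[of k] delta_pos divide_left_mono[of \<delta> "t (k+1) - t k" w]
  by (simp add: cell_length_def)

lemma finite_near: "finite (near w x)"
  unfolding near_def by (rule sampling_sequence_finite_near[OF ss])

lemma L_outside_near: "k \<notin> near w x \<Longrightarrow> L (w * x - t k) = 0"
  unfolding near_def by (intro L_support) auto

lemma K_outside_near: "k \<notin> near w x \<Longrightarrow> K (w * x - t k) v = 0"
  using Lip[of "w * x - t k" v 0] K0 L_outside_near by simp

lemma infsum_K_eq_sum_near: "(\<Sum>\<^sub>\<infinity>k. K (w * x - t k) (g k)) = (\<Sum>k\<in>near w x. K (w * x - t k) (g k))"
proof -
  have "(\<Sum>\<^sub>\<infinity>k. K (w * x - t k) (g k)) = infsum (\<lambda>k. K (w * x - t k) (g k)) (near w x)"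
    by (rule infsum_cong_neutral) (auto simp: K_outside_near)
  then show ?thesis using finite_near by simp
qed

lemma sum_L_near_le: "(\<Sum>k\<in>near w x. L (w * x - t k)) \<le> m"
  using m[OF finite_near] by simp

lemma S_op_eq_sum_near:
  assumes "0 < w"
  shows "S_op t K w f x = (\<Sum>k\<in>near w x. K (w * x - t k) (local_mean w k (t k / w)))"
proof -
  have "(w / (t (k+1) - t k)) * (LINT u:{t k / w .. t (k+1) / w}|lebesgue. f u) = local_mean w k (t k / w)" for k
  proof -
    have "t k / w \<le> t (k+1) / w" "t (k+1) / w - t k / w = cell_length w k"
      using cell_length_pos[OF assms, of k] by (auto simp: cell_length_def diff_divide_distrib)
    then show ?thesis
      by (simp add: local_mean_def cell_length_def set_lebesgue_integral_interval_shift)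
  qed
  then show ?thesis unfolding S_op_def by (simp add: infsum_K_eq_sum_near)
qed

lemma set_integrable_shifted_f: "0 < w \<Longrightarrow> set_integrable lborel {0..<cell_length w k} (\<lambda>y. f (a + y))"
  using cell_length_pos[of w k] by (intro set_integrable_interval_shift f_locally_integrable) auto

lemma jensen_eta_average:
  assumes "0 < l" "set_integrable lborel {0..<l} G" "G \<in> borel_measurable borel"
  shows "ennreal (\<eta> \<bar>(1/2) * ((1 / l) * (LINT y:{0..<l}|lborel. G y))\<bar>)
     \<le> ennreal (1 / l) * (\<integral>\<^sup>+y. indicator {0..<l} y * ennreal (\<eta> \<bar>(1/2) * G y\<bar>) \<partial>lborel)"
proof (rule jensen_interval_average[OF assms])
  show "convex_on UNIV (\<lambda>v. \<eta> \<bar>(1/2) * v\<bar>)"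
    using p\<eta> cv\<eta> by (intro convex_on_abs_mult) (auto simp: phi_function_def)
qed (simp add: phi_function_nonneg[OF p\<eta>])

lemma local_mean_diff:
  assumes "0 < w"
  shows "local_mean w k a - local_mean w k b
    = (1 / cell_length w k) * (LINT y:{0..<cell_length w k}|lborel. f (a + y) - f (b + y))"
  using set_integrable_shifted_f[OF assms]
  by (simp add: local_mean_def set_integral_diff right_diff_distrib)

lemma local_mean_minus_value:
  assumes "0 < w"
  shows "local_mean w k x - f x = (1 / cell_length w k) * (LINT y:{0..<cell_length w k}|lborel. f (x + y) - f x)"
proof -
  have l: "0 < cell_length w k" by (rule cell_length_pos[OF assms])
  show ?thesis
    using set_integrable_shifted_f[OF assms] set_integrable_const_interval l
    by (simp add: local_mean_def set_integral_diff right_diff_distrib set_integral_const)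
qed

lemma nn_integral_count_space_near:
  "(\<integral>\<^sup>+k. ennreal (L (w * x - t k)) * G k \<partial>count_space UNIV) = (\<Sum>k\<in>near w x. ennreal (L (w * x - t k)) * G k)"
  by (rule nn_integral_count_space') (auto simp: finite_near L_outside_near)

lemma phi_kernel_sum_near_le:
  "\<phi> (3 * \<mu> * \<bar>\<Sum>k\<in>near w x. K (w * x - t k) (a k) - K (w * x - t k) (b k)\<bar>)
     \<le> (\<Sum>k\<in>near w x. L (w * x - t k) / m * \<eta> \<bar>(1/2) * (a k - b k)\<bar>)"
proof -
  have "0 < 3 * \<mu>" using \<mu> by simp
  from phi_kernel_sum_diff_le[where z = "\<lambda>k. w * x - t k",
      OF finite_near Lip L_nonneg p\<psi> p\<phi> cv\<phi> sum_L_near_le this \<mu>(2) H]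
  show ?thesis by (simp add: abs_mult)
qed

lemma phi_cell_term_le:
  assumes w: "0 < w"
  shows "ennreal (\<phi> (3 * \<mu> * \<bar>\<Sum>k\<in>near w x. K (w * x - t k) (local_mean w k (t k / w))
                                         - K (w * x - t k) (local_mean w k x)\<bar>))
    \<le> ennreal (w / (\<delta> * m)) * (\<integral>\<^sup>+k. ennreal (L (w * x - t k)) * cell_oscillation w k x \<partial>count_space UNIV)"
proof -
  let ?L = "\<lambda>k. L (w * x - t k)" and ?J = "\<lambda>k. cell_oscillation w k x"
  have term_le: "ennreal (?L k / m * \<eta> \<bar>(1/2) * (local_mean w k (t k / w) - local_mean w k x)\<bar>)
      \<le> ennreal (w / (\<delta> * m)) * (ennreal (?L k) * ?J k)" for k
  proof -
    have "ennreal (\<eta> \<bar>(1/2) * (local_mean w k (t k / w) - local_mean w k x)\<bar>) \<le> ennreal (1 / cell_length w k) * ?J k"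
      unfolding local_mean_diff[OF w] cell_oscillation_def
      using set_integrable_shifted_f[OF w]
      by (intro jensen_eta_average cell_length_pos[OF w] set_integral_diff) auto
    then have "ennreal (?L k / m * \<eta> \<bar>(1/2) * (local_mean w k (t k / w) - local_mean w k x)\<bar>)
        \<le> ennreal (?L k / m) * (ennreal (1 / cell_length w k) * ?J k)"
      using L_nonneg m_nonneg phi_function_nonneg[OF p\<eta>]
      by (subst ennreal_mult') (auto intro: mult_left_mono)
    also have "\<dots> = ennreal (?L k / m * (1 / cell_length w k)) * ?J k"
      by (simp only: ennreal_mult'[OF divide_nonneg_nonneg[OF L_nonneg m_nonneg]] mult.assoc)
    also have "\<dots> \<le> ennreal (?L k / m * (w / \<delta>)) * ?J k"
      using inverse_cell_length_le[OF w] L_nonneg m_nonneg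
      by (intro mult_right_mono ennreal_leI mult_left_mono) auto
    also have "?L k / m * (w / \<delta>) = w / (\<delta> * m) * ?L k"
      by (simp add: mult_ac)
    also have "ennreal (w / (\<delta> * m) * ?L k) * ?J k = ennreal (w / (\<delta> * m)) * (ennreal (?L k) * ?J k)"
    proof -
      have "0 \<le> w / (\<delta> * m)" using w delta_pos m_nonneg by simp
      then show ?thesis by (simp only: ennreal_mult' mult.assoc)
    qed
    finally show ?thesis .
  qed
  have "ennreal (\<phi> (3 * \<mu> * \<bar>\<Sum>k\<in>near w x. K (w * x - t k) (local_mean w k (t k / w))
                                         - K (w * x - t k) (local_mean w k x)\<bar>))
      \<le> ennreal (\<Sum>k\<in>near w x. ?L k / m * \<eta> \<bar>(1/2) * (local_mean w k (t k / w) - local_mean w k x)\<bar>)"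
    by (rule ennreal_leI[OF phi_kernel_sum_near_le])
  also have "\<dots> = (\<Sum>k\<in>near w x. ennreal (?L k / m * \<eta> \<bar>(1/2) * (local_mean w k (t k / w) - local_mean w k x)\<bar>))"
    using L_nonneg m_nonneg phi_function_nonneg[OF p\<eta>] by (intro sum_ennreal[symmetric]) auto
  also have "\<dots> \<le> (\<Sum>k\<in>near w x. ennreal (w / (\<delta> * m)) * (ennreal (?L k) * ?J k))"
    by (intro sum_mono term_le)
  also have "\<dots> = ennreal (w / (\<delta> * m)) * (\<integral>\<^sup>+k. ennreal (?L k) * ?J k \<partial>count_space UNIV)"
    by (simp add: sum_distrib_left nn_integral_count_space_near)
  finally show ?thesis .
qed

lemma sum_L_near_div_le_1: "(\<Sum>k\<in>near w x. L (w * x - t k) / m) \<le> 1"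
  using sum_L_near_le[of w x] m_nonneg
  by (cases "m = 0") (simp_all add: sum_divide_distrib[symmetric])

lemma phi_mean_term_le:
  assumes w: "0 < w"
  shows "ennreal (\<phi> (3 * \<mu> * \<bar>\<Sum>k\<in>near w x. K (w * x - t k) (local_mean w k x) - K (w * x - t k) (f x)\<bar>))
    \<le> ennreal (w / \<delta>) * forward_oscillation (\<Delta> / w) x"
proof -
  let ?L = "\<lambda>k. L (w * x - t k)" and ?J = "forward_oscillation (\<Delta> / w) x"
  have term_le: "ennreal (\<eta> \<bar>(1/2) * (local_mean w k x - f x)\<bar>) \<le> ennreal (w / \<delta>) * ?J" for k
  proof -
    have "ennreal (\<eta> \<bar>(1/2) * (local_mean w k x - f x)\<bar>) \<le> ennreal (1 / cell_length w k)
        * (\<integral>\<^sup>+y. indicator {0..<cell_length w k} y * ennreal (\<eta> \<bar>(1/2) * (f (x + y) - f x)\<bar>) \<partial>lborel)"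
      unfolding local_mean_minus_value[OF w] using set_integrable_shifted_f[OF w] set_integrable_const_interval
      by (intro jensen_eta_average cell_length_pos[OF w] set_integral_diff) auto
    also have "\<dots> \<le> ennreal (w / \<delta>) * ?J"
      unfolding forward_oscillation_def using inverse_cell_length_le[OF w] cell_length_le[OF w, of k]
      by (intro mult_mono ennreal_leI nn_integral_mono) (auto simp: indicator_def)
    finally show ?thesis .
  qed
  have "ennreal (\<phi> (3 * \<mu> * \<bar>\<Sum>k\<in>near w x. K (w * x - t k) (local_mean w k x) - K (w * x - t k) (f x)\<bar>))
      \<le> ennreal (\<Sum>k\<in>near w x. ?L k / m * \<eta> \<bar>(1/2) * (local_mean w k x - f x)\<bar>)"
    by (rule ennreal_leI[OF phi_kernel_sum_near_le])
  also have "\<dots> = (\<Sum>k\<in>near w x. ennreal (?L k / m) * ennreal (\<eta> \<bar>(1/2) * (local_mean w k x - f x)\<bar>))"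
    using L_nonneg m_nonneg phi_function_nonneg[OF p\<eta>] by (intro ennreal_sum_mult) auto
  also have "\<dots> \<le> (\<Sum>k\<in>near w x. ennreal (?L k / m) * (ennreal (w / \<delta>) * ?J))"
    by (intro sum_mono mult_left_mono term_le) simp
  also have "\<dots> = ennreal (\<Sum>k\<in>near w x. ?L k / m) * (ennreal (w / \<delta>) * ?J)"
    using L_nonneg m_nonneg by (simp add: sum_distrib_right[symmetric] sum_ennreal)
  also have "\<dots> \<le> ennreal (w / \<delta>) * ?J"
    using sum_L_near_div_le_1 mult_right_mono[of _ 1 "ennreal (w / \<delta>) * ?J"]
    by (simp add: ennreal_le_1)
  finally show ?thesis .
qed

lemma phi_kernel_error_term_le:
  assumes w: "1 \<le> w" "W \<le> w"
  shows "\<phi> (3 * \<mu> * \<bar>(\<Sum>k\<in>near w x. K (w * x - t k) (f x)) - f x\<bar>)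
    \<le> w powr (- \<theta>) * \<phi> \<bar>3 * \<mu> * C * f x\<bar>"
proof -
  have w\<theta>: "0 \<le> w powr (- \<theta>)" "w powr (- \<theta>) \<le> 1"
    using w \<theta> by (auto simp: powr_minus_divide ge_one_powr_ge_zero)
  have "\<bar>(\<Sum>k\<in>near w x. K (w * x - t k) (f x)) - f x\<bar> \<le> C * w powr (- \<theta>) * \<bar>f x\<bar>"
  proof (cases "f x = 0")
    case False
    with chi4[OF w(2), of "f x" x]
    have "\<bar>(\<Sum>k\<in>near w x. K (w * x - t k) (f x)) / f x - 1\<bar> \<le> C * w powr (- \<theta>)"
      by (simp add: infsum_K_eq_sum_near)
    also have "(\<Sum>k\<in>near w x. K (w * x - t k) (f x)) / f x - 1
        = ((\<Sum>k\<in>near w x. K (w * x - t k) (f x)) - f x) / f x"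
      using False by (simp add: diff_divide_distrib)
    finally show ?thesis using False by (simp add: abs_divide divide_le_eq)
  qed (simp add: K0)
  then have "3 * \<mu> * \<bar>(\<Sum>k\<in>near w x. K (w * x - t k) (f x)) - f x\<bar> \<le> w powr (- \<theta>) * \<bar>3 * \<mu> * C * f x\<bar>"
    using \<mu> C by (simp add: abs_mult mult_ac)
  then have "\<phi> (3 * \<mu> * \<bar>(\<Sum>k\<in>near w x. K (w * x - t k) (f x)) - f x\<bar>)
      \<le> \<phi> (w powr (- \<theta>) * \<bar>3 * \<mu> * C * f x\<bar>)"
    using \<mu> by (intro phi_function_mono[OF p\<phi>]) auto
  also have "\<dots> \<le> w powr (- \<theta>) * \<phi> \<bar>3 * \<mu> * C * f x\<bar>"
    using w\<theta> p\<phi> by (intro convex_on_scale_le[OF cv\<phi>]) (auto simp: phi_function_def)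
  finally show ?thesis .
qed

lemma phi_S_op_diff_le:
  assumes w: "1 \<le> w" "W \<le> w"
  shows "ennreal (\<phi> \<bar>\<mu> * (S_op t K w f x - f x)\<bar>) \<le> ennreal (1/3) *
      (ennreal (w / (\<delta> * m)) * (\<integral>\<^sup>+k. ennreal (L (w * x - t k)) * cell_oscillation w k x \<partial>count_space UNIV)
       + ennreal (w / \<delta>) * forward_oscillation (\<Delta> / w) x
       + ennreal (w powr (- \<theta>)) * ennreal (\<phi> \<bar>3 * \<mu> * C * f x\<bar>))"
proof -
  have "0 < w" using w by simp
  define P1 where "P1 = (\<Sum>k\<in>near w x. K (w * x - t k) (local_mean w k (t k / w)) - K (w * x - t k) (local_mean w k x))"
  define P2 where "P2 = (\<Sum>k\<in>near w x. K (w * x - t k) (local_mean w k x) - K (w * x - t k) (f x))"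
  define P3 where "P3 = (\<Sum>k\<in>near w x. K (w * x - t k) (f x)) - f x"
  have "S_op t K w f x - f x = P1 + P2 + P3"
    unfolding S_op_eq_sum_near[OF \<open>0 < w\<close>] P1_def P2_def P3_def by (simp add: sum_subtractf)
  then have "\<phi> \<bar>\<mu> * (S_op t K w f x - f x)\<bar>
      \<le> (\<phi> (3 * \<mu> * \<bar>P1\<bar>) + \<phi> (3 * \<mu> * \<bar>P2\<bar>) + \<phi> (3 * \<mu> * \<bar>P3\<bar>)) / 3"
    using phi_abs_mult_sum3_le[OF p\<phi> cv\<phi> \<mu>(1)] by simp
  then have "ennreal (\<phi> \<bar>\<mu> * (S_op t K w f x - f x)\<bar>)
      \<le> ennreal (1/3 * (\<phi> (3 * \<mu> * \<bar>P1\<bar>) + \<phi> (3 * \<mu> * \<bar>P2\<bar>) + \<phi> (3 * \<mu> * \<bar>P3\<bar>)))"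
    by (intro ennreal_leI) simp
  also have "\<dots> = ennreal (1/3) * (ennreal (\<phi> (3 * \<mu> * \<bar>P1\<bar>))
      + ennreal (\<phi> (3 * \<mu> * \<bar>P2\<bar>)) + ennreal (\<phi> (3 * \<mu> * \<bar>P3\<bar>)))"
    using \<mu> phi_function_nonneg[OF p\<phi>] by (subst ennreal_mult') auto
  also have "\<dots> \<le> ennreal (1/3) *
      (ennreal (w / (\<delta> * m)) * (\<integral>\<^sup>+k. ennreal (L (w * x - t k)) * cell_oscillation w k x \<partial>count_space UNIV)
       + ennreal (w / \<delta>) * forward_oscillation (\<Delta> / w) x
       + ennreal (w powr (- \<theta>)) * ennreal (\<phi> \<bar>3 * \<mu> * C * f x\<bar>))"
    unfolding P1_def P2_def P3_def ennreal_mult'[OF powr_ge_zero, symmetric]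
    using phi_cell_term_le[OF \<open>0 < w\<close>] phi_mean_term_le[OF \<open>0 < w\<close>] phi_kernel_error_term_le[OF w]
    by (intro mult_left_mono add_mono ennreal_leI) auto
  finally show ?thesis .
qed

section \<open>The integrated estimate\<close>

lemma L_affine_measurable: "(\<lambda>x. L (a + b * x)) \<in> borel_measurable lebesgue"
proof (cases "b = 0")
  case False
  then show ?thesis
    using measurable_compose[OF lebesgue_affine_measurable[where c = "\<lambda>_. b" and t = a]
        borel_measurable_integrable[OF L_integrable]]
    by simp
qed simp

lemma L_dilation_measurable[measurable]:
  "(\<lambda>x. L (w * x)) \<in> borel_measurable lebesgue" "(\<lambda>x. L (w * x - s)) \<in> borel_measurable lebesgue"
  using L_affine_measurable[of 0 w] L_affine_measurable[of "- s" w] by (simp_all add: algebra_simps)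

lemma f_lebesgue_measurable[measurable]: "f \<in> borel_measurable lebesgue"
  by (rule measurable_completion) simp

lemma borel_measurable_cell_oscillation[measurable]: "cell_oscillation w k \<in> borel_measurable borel"
proof -
  have "(\<lambda>(x, y). indicator {0..<cell_length w k} y * ennreal (\<eta> \<bar>(1/2) * (f (t k / w + y) - f (x + y))\<bar>))
      \<in> borel_measurable (borel \<Otimes>\<^sub>M lborel)"
    by measurable
  then show ?thesis
    unfolding cell_oscillation_def using lborel.borel_measurable_nn_integral by simp
qed

lemma borel_measurable_forward_oscillation[measurable]: "forward_oscillation d \<in> borel_measurable borel"
proof -
  have "(\<lambda>(x, y). indicator {0..d} y * ennreal (\<eta> \<bar>(1/2) * (f (x + y) - f x)\<bar>))
      \<in> borel_measurable (borel \<Otimes>\<^sub>M lborel)"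
    by measurable
  then show ?thesis
    unfolding forward_oscillation_def using lborel.borel_measurable_nn_integral by simp
qed

lemma lebesgue_measurable_cell_oscillation[measurable]: "cell_oscillation w k \<in> borel_measurable lebesgue"
  by (rule measurable_completion) measurable

lemma lebesgue_measurable_forward_oscillation[measurable]: "forward_oscillation d \<in> borel_measurable lebesgue"
  by (rule measurable_completion) measurable

lemma translate_integral_le_modulus:
  assumes "\<bar>s\<bar> \<le> d"
  shows "(\<integral>\<^sup>+x. ennreal (\<eta> \<bar>(1/2) * (f (x + s) - f x)\<bar>) \<partial>lborel) \<le> modulus \<eta> (1/2) f d"
proof -
  have "(\<integral>\<^sup>+x. ennreal (\<eta> \<bar>(1/2) * (f (x + s) - f x)\<bar>) \<partial>lborel) = modular \<eta> (\<lambda>x. (1/2) * (f (x + s) - f x))"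
    unfolding modular_def by (simp add: nn_integral_completion)
  also have "\<dots> \<le> modulus \<eta> (1/2) f d"
    unfolding modulus_def using assms by (intro SUP_upper) auto
  finally show ?thesis .
qed

lemma nn_integral_forward_oscillation_le:
  assumes "0 \<le> d"
  shows "(\<integral>\<^sup>+x. forward_oscillation d x \<partial>lebesgue) \<le> ennreal d * modulus \<eta> (1/2) f d"
proof -
  let ?G = "\<lambda>x y. indicator {0..d} y * ennreal (\<eta> \<bar>(1/2) * (f (x + y) - f x)\<bar>)"
  have "(\<integral>\<^sup>+x. forward_oscillation d x \<partial>lebesgue) = (\<integral>\<^sup>+x. forward_oscillation d x \<partial>lborel)"
    by (rule nn_integral_completion)
  also have "\<dots> = (\<integral>\<^sup>+x. (\<integral>\<^sup>+y. ?G x y \<partial>lborel) \<partial>lborel)"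
    unfolding forward_oscillation_def ..
  also have "\<dots> = (\<integral>\<^sup>+y. (\<integral>\<^sup>+x. ?G x y \<partial>lborel) \<partial>lborel)"
    by (intro lborel_pair.Fubini'[simplified]) measurable
  also have "\<dots> = (\<integral>\<^sup>+y. indicator {0..d} y
      * (\<integral>\<^sup>+x. ennreal (\<eta> \<bar>(1/2) * (f (x + y) - f x)\<bar>) \<partial>lborel) \<partial>lborel)"
    by (intro nn_integral_cong nn_integral_cmult) measurable
  also have "\<dots> \<le> (\<integral>\<^sup>+y. modulus \<eta> (1/2) f d * indicator {0..d} y \<partial>lborel)"
    using translate_integral_le_modulus
    by (intro nn_integral_mono) (auto simp: indicator_def mult.commute)
  also have "\<dots> = modulus \<eta> (1/2) f d * ennreal d"
    using assms by (simp add: nn_integral_cmult_indicator)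
  finally show ?thesis by (simp add: mult.commute)
qed

lemma nn_integral_shifted_cell_oscillations_le:
  assumes w: "0 < w" and h: "\<bar>h\<bar> \<le> d"
  shows "(\<integral>\<^sup>+k. cell_oscillation w k (t k / w + h) \<partial>count_space UNIV) \<le> modulus \<eta> (1/2) f d"
proof -
  define E where "E z = ennreal (\<eta> \<bar>(1/2) * (f z - f (z + h))\<bar>)" for z
  have [measurable]: "E \<in> borel_measurable borel" unfolding E_def by measurable
  have cell: "cell_oscillation w k (t k / w + h)
      = (\<integral>\<^sup>+z. indicator {t k / w ..< t (k+1) / w} z * E z \<partial>lborel)" for k
  proof -
    have "(\<integral>\<^sup>+z. indicator {t k / w ..< t (k+1) / w} z * E z \<partial>lborel)
        = (\<integral>\<^sup>+y. indicator {t k / w ..< t (k+1) / w} (t k / w + 1 * y) * E (t k / w + 1 * y) \<partial>lborel)"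
      using nn_integral_real_affine[of "\<lambda>z. indicator {t k / w ..< t (k+1) / w} z * E z" 1 "t k / w"]
      by simp
    also have "\<dots> = cell_oscillation w k (t k / w + h)"
      unfolding E_def cell_oscillation_def cell_length_def
      by (intro nn_integral_cong) (auto simp: indicator_def diff_divide_distrib algebra_simps)
    finally show ?thesis by simp
  qed
  have "(\<integral>\<^sup>+k. cell_oscillation w k (t k / w + h) \<partial>count_space UNIV)
      = (\<integral>\<^sup>+z. (\<integral>\<^sup>+k. indicator {t k / w ..< t (k+1) / w} z * E z \<partial>count_space UNIV) \<partial>lborel)"
    unfolding cell by (rule nn_integral_count_space_nn_integral[symmetric]) auto
  also have "\<dots> \<le> (\<integral>\<^sup>+z. E z \<partial>lborel)"
    by (intro nn_integral_mono nn_integral_sampling_cells_le[OF ss w])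
  also have "\<dots> = (\<integral>\<^sup>+x. ennreal (\<eta> \<bar>(1/2) * (f (x + - h) - f x)\<bar>) \<partial>lborel)"
    using nn_integral_real_affine[of E 1 "- h"] by (simp add: E_def add.commute)
  also have "\<dots> \<le> modulus \<eta> (1/2) f d"
    using h by (intro translate_integral_le_modulus) simp
  finally show ?thesis .
qed

lemma nn_integral_L_dilated:
  assumes "0 < w"
  shows "(\<integral>\<^sup>+h. ennreal (L (w * h)) \<partial>lebesgue) = ennreal ((LINT x|lebesgue. L x) / w)"
proof -
  have "ennreal (LINT x|lebesgue. L x) = (\<integral>\<^sup>+x. ennreal (L x) \<partial>lebesgue)"
    using L_integrable L_nonneg by (simp add: nn_integral_eq_integral)
  also have "\<dots> = ennreal \<bar>w\<bar> * (\<integral>\<^sup>+h. ennreal (L (0 + w * h)) \<partial>lebesgue)"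
    using assms L_integrable by (intro nn_integral_real_affine_lebesgue) auto
  finally have "ennreal (LINT x|lebesgue. L x) = ennreal w * (\<integral>\<^sup>+h. ennreal (L (w * h)) \<partial>lebesgue)"
    using assms by simp
  then have "ennreal (1 / w) * ennreal (LINT x|lebesgue. L x) = (\<integral>\<^sup>+h. ennreal (L (w * h)) \<partial>lebesgue)"
    using assms by (simp add: mult.assoc[symmetric] ennreal_mult'[symmetric])
  then show ?thesis
    using assms by (simp add: ennreal_mult'[symmetric])
qed

lemma nn_integral_cell_term_le:
  assumes w: "0 < w" and Rw: "R / w \<le> d"
  shows "(\<integral>\<^sup>+x. (\<integral>\<^sup>+k. ennreal (L (w * x - t k)) * cell_oscillation w k x \<partial>count_space UNIV) \<partial>lebesgue)
     \<le> ennreal ((LINT x|lebesgue. L x) / w) * modulus \<eta> (1/2) f d"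
proof -
  let ?L = "\<lambda>h. ennreal (L (w * h))" and ?\<omega> = "modulus \<eta> (1/2) f d"
  have [measurable]: "(\<lambda>h. cell_oscillation w k (t k / w + h)) \<in> borel_measurable lebesgue" for k
    by (rule measurable_completion) measurable
  have shift: "(\<integral>\<^sup>+x. ennreal (L (w * x - t k)) * cell_oscillation w k x \<partial>lebesgue)
      = (\<integral>\<^sup>+h. ?L h * cell_oscillation w k (t k / w + h) \<partial>lebesgue)" for k
  proof -
    have "(\<integral>\<^sup>+x. ennreal (L (w * x - t k)) * cell_oscillation w k x \<partial>lebesgue)
        = ennreal \<bar>1\<bar> * (\<integral>\<^sup>+h. ennreal (L (w * (t k / w + 1 * h) - t k))
            * cell_oscillation w k (t k / w + 1 * h) \<partial>lebesgue)"
      by (intro nn_integral_real_affine_lebesgue) auto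
    then show ?thesis using w by (simp add: algebra_simps)
  qed
  have bound: "?L h * (\<integral>\<^sup>+k. cell_oscillation w k (t k / w + h) \<partial>count_space UNIV) \<le> ?L h * ?\<omega>" for h
  proof (cases "L (w * h) = 0")
    case False
    then have "w * \<bar>h\<bar> \<le> R"
      using L_support[of "w * h"] w by (force simp: abs_mult)
    then have "\<bar>h\<bar> \<le> d"
      using w Rw pos_le_divide_eq[OF w, of "\<bar>h\<bar>" R] by (simp add: mult.commute)
    then show ?thesis by (intro mult_left_mono nn_integral_shifted_cell_oscillations_le[OF w]) auto
  qed simp
  have "(\<integral>\<^sup>+x. (\<integral>\<^sup>+k. ennreal (L (w * x - t k)) * cell_oscillation w k x \<partial>count_space UNIV) \<partial>lebesgue)
      = (\<integral>\<^sup>+k. (\<integral>\<^sup>+h. ?L h * cell_oscillation w k (t k / w + h) \<partial>lebesgue) \<partial>count_space UNIV)"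
    unfolding shift[symmetric] by (intro nn_integral_count_space_nn_integral) auto
  also have "\<dots> = (\<integral>\<^sup>+h. ?L h * (\<integral>\<^sup>+k. cell_oscillation w k (t k / w + h) \<partial>count_space UNIV) \<partial>lebesgue)"
    by (subst nn_integral_count_space_nn_integral[symmetric]) (auto simp: nn_integral_cmult)
  also have "\<dots> \<le> (\<integral>\<^sup>+h. ?L h * ?\<omega> \<partial>lebesgue)"
    by (intro nn_integral_mono bound)
  also have "\<dots> = ennreal ((LINT x|lebesgue. L x) / w) * ?\<omega>"
    using w by (simp add: nn_integral_multc nn_integral_L_dilated)
  finally show ?thesis .
qed

lemma modular_S_op_diff_le:
  assumes w: "1 \<le> w" "W \<le> w" and Rw: "R / w \<le> d"
  shows "modular \<phi> (\<lambda>x. \<mu> * (S_op t K w f x - f x))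
     \<le> ennreal ((LINT x|lebesgue. L x) / (3 * \<delta> * m)) * modulus \<eta> (1/2) f d
       + ennreal (\<Delta> / (3 * \<delta>)) * modulus \<eta> (1/2) f (\<Delta> / w)
       + modular \<phi> (\<lambda>x. (3 * \<mu> * C) * f x) / 3 * ennreal (w powr (- \<theta>))"
proof -
  have "0 < w" using w by simp
  let ?I = "LINT x|lebesgue. L x"
  define T1 where "T1 x = ennreal (w / (\<delta> * m))
    * (\<integral>\<^sup>+k. ennreal (L (w * x - t k)) * cell_oscillation w k x \<partial>count_space UNIV)" for x
  define T2 where "T2 x = ennreal (w / \<delta>) * forward_oscillation (\<Delta> / w) x" for x
  define T3 where "T3 x = ennreal (w powr (- \<theta>)) * ennreal (\<phi> \<bar>3 * \<mu> * C * f x\<bar>)" for x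
  have [measurable]: "(\<lambda>x. \<integral>\<^sup>+k. ennreal (L (w * x - t k)) * cell_oscillation w k x \<partial>count_space UNIV)
      \<in> borel_measurable lebesgue"
    by (rule borel_measurable_nn_integral_count_space_int) measurable
  have m1: "T1 \<in> borel_measurable lebesgue" unfolding T1_def by measurable
  have m2: "T2 \<in> borel_measurable lebesgue" unfolding T2_def by measurable
  have m3: "T3 \<in> borel_measurable lebesgue" unfolding T3_def by measurable
  have "modular \<phi> (\<lambda>x. \<mu> * (S_op t K w f x - f x))
      \<le> (\<integral>\<^sup>+x. ennreal (1/3) * (T1 x + T2 x + T3 x) \<partial>lebesgue)"
    unfolding modular_def T1_def T2_def T3_def by (intro nn_integral_mono phi_S_op_diff_le[OF w])
  also have "\<dots> = ennreal (1/3)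
      * ((\<integral>\<^sup>+x. T1 x \<partial>lebesgue) + (\<integral>\<^sup>+x. T2 x \<partial>lebesgue) + (\<integral>\<^sup>+x. T3 x \<partial>lebesgue))"
    using m1 m2 m3 by (simp add: nn_integral_cmult nn_integral_add)
  also have "\<dots> \<le> ennreal (1/3) * (ennreal (w / (\<delta> * m)) * (ennreal (?I / w) * modulus \<eta> (1/2) f d)
      + ennreal (w / \<delta>) * (ennreal (\<Delta> / w) * modulus \<eta> (1/2) f (\<Delta> / w))
      + ennreal (w powr (- \<theta>)) * modular \<phi> (\<lambda>x. (3 * \<mu> * C) * f x))"
  proof -
    have "(\<integral>\<^sup>+x. T1 x \<partial>lebesgue) \<le> ennreal (w / (\<delta> * m)) * (ennreal (?I / w) * modulus \<eta> (1/2) f d)"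
      unfolding T1_def by (subst nn_integral_cmult) (auto intro: mult_left_mono nn_integral_cell_term_le[OF \<open>0 < w\<close> Rw])
    moreover have "(\<integral>\<^sup>+x. T2 x \<partial>lebesgue) \<le> ennreal (w / \<delta>) * (ennreal (\<Delta> / w) * modulus \<eta> (1/2) f (\<Delta> / w))"
    proof -
      have "0 \<le> \<Delta> / w" using delta_pos cell_ge[of 0] cell_le[of 0] \<open>0 < w\<close> by simp
      then show ?thesis unfolding T2_def
        by (subst nn_integral_cmult) (simp_all add: mult_left_mono nn_integral_forward_oscillation_le)
    qed
    moreover have "(\<integral>\<^sup>+x. T3 x \<partial>lebesgue) = ennreal (w powr (- \<theta>)) * modular \<phi> (\<lambda>x. (3 * \<mu> * C) * f x)"
      unfolding T3_def modular_def by (rule nn_integral_cmult) measurable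
    ultimately show ?thesis by (intro mult_left_mono add_mono) auto
  qed
  also have "\<dots> = ennreal (?I / (3 * \<delta> * m)) * modulus \<eta> (1/2) f d
      + ennreal (\<Delta> / (3 * \<delta>)) * modulus \<eta> (1/2) f (\<Delta> / w)
      + modular \<phi> (\<lambda>x. (3 * \<mu> * C) * f x) / 3 * ennreal (w powr (- \<theta>))"
  proof -
    have "ennreal (1/3) * (ennreal (w / (\<delta> * m)) * (ennreal (?I / w) * modulus \<eta> (1/2) f d))
        = ennreal (1/3 * (w / (\<delta> * m)) * (?I / w)) * modulus \<eta> (1/2) f d"
      using \<open>0 < w\<close> delta_pos m_nonneg by (intro ennreal_mult_mult_assoc) auto
    also have "1/3 * (w / (\<delta> * m)) * (?I / w) = ?I / (3 * \<delta> * m)"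
      using \<open>0 < w\<close> by (cases "m = 0") (simp_all add: field_simps)
    finally have e1: "ennreal (1/3) * (ennreal (w / (\<delta> * m)) * (ennreal (?I / w) * modulus \<eta> (1/2) f d))
        = ennreal (?I / (3 * \<delta> * m)) * modulus \<eta> (1/2) f d" .
    have "ennreal (1/3) * (ennreal (w / \<delta>) * (ennreal (\<Delta> / w) * modulus \<eta> (1/2) f (\<Delta> / w)))
        = ennreal (1/3 * (w / \<delta>) * (\<Delta> / w)) * modulus \<eta> (1/2) f (\<Delta> / w)"
      using \<open>0 < w\<close> delta_pos by (intro ennreal_mult_mult_assoc) auto
    also have "1/3 * (w / \<delta>) * (\<Delta> / w) = \<Delta> / (3 * \<delta>)"
      using \<open>0 < w\<close> by (simp add: field_simps)
    finally have e2: "ennreal (1/3) * (ennreal (w / \<delta>) * (ennreal (\<Delta> / w) * modulus \<eta> (1/2) f (\<Delta> / w)))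
        = ennreal (\<Delta> / (3 * \<delta>)) * modulus \<eta> (1/2) f (\<Delta> / w)" .
    show ?thesis
      unfolding distrib_left e1 e2 ennreal_third_mult[of "w powr (- \<theta>)"] ..
  qed
  finally show ?thesis .
qed

lemma eventually_modular_S_op_diff_le:
  assumes \<alpha>: "0 < \<alpha>" "\<alpha> < 1"
  shows "\<forall>\<^sub>F w in at_top. modular \<phi> (\<lambda>x. \<mu> * (S_op t K w f x - f x))
     \<le> ennreal ((LINT x|lebesgue. L x) / (3 * \<delta> * m)) * modulus \<eta> (1/2) f (1 / w powr \<alpha>)
       + ennreal (\<Delta> / (3 * \<delta>)) * modulus \<eta> (1/2) f (\<Delta> / w)
       + modular \<phi> (\<lambda>x. (3 * \<mu> * C) * f x) / 3 * ennreal (w powr (- \<theta>))"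
proof -
  have "\<forall>\<^sub>F w in at_top. 1 \<le> w \<and> W \<le> w \<and> R powr (1 / (1 - \<alpha>)) \<le> w"
    by (intro eventually_conj eventually_ge_at_top)
  then show ?thesis
  proof eventually_elim
    case (elim w)
    have "R = (R powr (1 / (1 - \<alpha>))) powr (1 - \<alpha>)"
      using R \<alpha> by (simp add: powr_powr)
    also have "\<dots> \<le> w powr (1 - \<alpha>)"
      using elim \<alpha> by (intro powr_mono2) auto
    also have "\<dots> = w / w powr \<alpha>"
      using elim by (simp add: powr_diff)
    finally have "R / w \<le> 1 / w powr \<alpha>"
      using elim by (simp add: field_simps)
    then show ?case using elim by (intro modular_S_op_diff_le) auto
  qed
qed

lemma modular_S_op_diff_estimate:
  "\<forall>\<alpha>. 0 < \<alpha> \<and> \<alpha> < 1 \<longrightarrow>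
    (\<exists>\<mu>>0. \<exists>lam0>0. \<exists>lam>0. \<forall>\<^sub>F w in at_top.
       modular \<phi> (\<lambda>x. \<mu> * (S_op t K w f x - f x))
       \<le> ennreal ((LINT x|lebesgue. L x) / (3 * \<delta> * m)) * modulus \<eta> lam f (1 / w powr \<alpha>)
         + ennreal (\<Delta> / (3 * \<delta>)) * modulus \<eta> lam f (\<Delta> / w)
         + modular \<phi> (\<lambda>x. lam0 * f x) / 3 * ennreal (w powr (- \<theta>)))"
proof -
  have "0 < 3 * \<mu> * C" "(0::real) < 1/2" using \<mu> C by simp_all
  with \<mu>(1) eventually_modular_S_op_diff_le show ?thesis by blast
qed

end

section \<open>Passing to a Borel representative\<close>

lemma modular_cong_AE: "AE x in lebesgue. f x = g x \<Longrightarrow> modular \<phi> f = modular \<phi> g"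
  unfolding modular_def by (intro nn_integral_cong_AE) auto

lemma S_op_cong_AE:
  assumes "f \<in> borel_measurable lebesgue" "g \<in> borel_measurable lebesgue" "AE x in lebesgue. f x = g x"
  shows "S_op t K w f = S_op t K w g"
proof -
  have "(LINT u:{a..b}|lebesgue. f u) = (LINT u:{a..b}|lebesgue. g u)" for a b
    using assms by (intro set_lebesgue_integral_cong_AE) auto
  then show ?thesis unfolding S_op_def by simp
qed

lemma modulus_cong_AE:
  fixes f g :: "real \<Rightarrow> real"
  assumes "AE x in lborel. f x = g x"
  shows "modulus \<eta> c f d = modulus \<eta> c g d"
proof -
  from assms obtain N where "{x \<in> space lborel. f x \<noteq> g x} \<subseteq> N" "emeasure lborel N = 0" "N \<in> sets lborel"
    by (rule AE_E)
  then have N: "N \<in> null_sets lborel" "{x. f x \<noteq> g x} \<subseteq> N" by auto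
  have shifted: "AE x in lebesgue. f (x + s) = g (x + s)" for s
  proof -
    have "AE x in lborel. s + 1 * x \<notin> N"
      using AE_not_in[OF N(1)] N(1) by (intro AE_borel_affine) auto
    then have "AE x in lborel. f (x + s) = g (x + s)"
      by eventually_elim (use N(2) in \<open>auto simp: add.commute\<close>)
    then show ?thesis by (rule AE_completion)
  qed
  have "AE x in lebesgue. c * (f (x + s) - f x) = c * (g (x + s) - g x)" for s
    using shifted[of s] AE_completion[OF assms] by eventually_elim simp
  then show ?thesis unfolding modulus_def by (intro SUP_cong refl modular_cong_AE)
qed

lemma orlicz_space_borel_representative:
  assumes f: "f \<in> orlicz_space (\<lambda>u. \<phi> u + \<eta> u)"
    and p\<phi>: "phi_function \<phi>" and cv\<phi>: "convex_on {0..} \<phi>" and p\<eta>: "phi_function \<eta>"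
  obtains g where "g \<in> borel_measurable borel" "AE x in lborel. f x = g x"
    "\<And>a b. set_integrable lborel {a..b} g"
proof -
  obtain c where c: "0 < c" and fin: "modular (\<lambda>u. \<phi> u + \<eta> u) (\<lambda>x. c * f x) < \<infinity>"
    and fm: "f \<in> borel_measurable lebesgue"
    using f unfolding orlicz_space_def by blast
  obtain g where g: "g \<in> borel_measurable lborel" and ae: "AE x in lborel. f x = g x"
    using completion_ex_borel_measurable_real[OF fm] by blast
  have "(\<integral>\<^sup>+x. ennreal (\<phi> \<bar>c * g x\<bar>) \<partial>lborel) = (\<integral>\<^sup>+x. ennreal (\<phi> \<bar>c * g x\<bar>) \<partial>lebesgue)"
    by (rule nn_integral_completion[symmetric])
  also have "\<dots> = (\<integral>\<^sup>+x. ennreal (\<phi> \<bar>c * f x\<bar>) \<partial>lebesgue)"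
    using AE_completion[OF ae] by (intro nn_integral_cong_AE) auto
  also have "\<dots> \<le> modular (\<lambda>u. \<phi> u + \<eta> u) (\<lambda>x. c * f x)"
    unfolding modular_def using phi_function_nonneg[OF p\<eta>] by (intro nn_integral_mono ennreal_leI) auto
  finally have "(\<integral>\<^sup>+x. ennreal (\<phi> \<bar>c * g x\<bar>) \<partial>lborel) < \<infinity>" using fin by simp
  with g c p\<phi> cv\<phi> have "set_integrable lborel {a..b} g" for a b
    by (intro set_integrable_interval_if_phi_integral_finite) auto
  with g ae show ?thesis using that by simp
qed

lemma finite_sum_le_m0:
  assumes "m0_finite t L" "\<And>x. 0 \<le> L x" "finite F"
  shows "(\<Sum>k\<in>F. L (u - t k)) \<le> m0 t L"
proof -
  obtain M where M: "\<And>u. (\<lambda>k. L (u - t k)) summable_on UNIV \<and> (\<Sum>\<^sub>\<infinity>k. L (u - t k)) \<le> M"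
    using assms(1) unfolding m0_finite_def by blast
  have "(\<Sum>k\<in>F. L (u - t k)) \<le> (\<Sum>\<^sub>\<infinity>k. L (u - t k))"
    using M[of u] assms(2,3) by (intro finite_sum_le_infsum) auto
  also have "\<dots> \<le> m0 t L"
    unfolding m0_def by (rule cSUP_upper) (use M in \<open>auto intro!: bdd_aboveI2\<close>)
  finally show ?thesis .
qed

lemma sampling_kantorovich_setting:
  assumes ss: "sampling_sequence t \<delta> \<Delta>" and kc: "kernel_cond t K L \<psi> \<theta>"
    and L1: "L1_cond L" and m0: "m0_finite t L" and supp: "\<exists>R. \<forall>x. \<bar>x\<bar> > R \<longrightarrow> L x = 0"
    and p\<phi>: "phi_function \<phi>" and cv\<phi>: "convex_on {0..} \<phi>" and H: "condH \<phi> \<psi> \<eta>"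
    and p\<eta>: "phi_function \<eta>" and cv\<eta>: "convex_on {0..} \<eta>"
    and g: "g \<in> borel_measurable borel" "\<And>a b. set_integrable lborel {a..b} g"
  obtains R C W C\<^sub>H \<mu> where "sampling_kantorovich t \<delta> \<Delta> \<theta> K L \<psi> \<phi> \<eta> g R C W C\<^sub>H \<mu> (m0 t L)"
proof -
  have K: "\<And>x. K x 0 = 0" "\<And>x. 0 \<le> L x" "phi_function \<psi>" "0 < \<theta>"
    "\<And>x u v. \<bar>K x u - K x v\<bar> \<le> L x * \<psi> \<bar>u - v\<bar>"
    using kc unfolding kernel_cond_def by auto
  obtain C W where chi4: "\<And>w x u. W \<le> w \<Longrightarrow> u \<noteq> 0 \<Longrightarrow>
      \<bar>(1 / u) * (\<Sum>\<^sub>\<infinity>k. K (w * x - t k) u) - 1\<bar> \<le> C * w powr (- \<theta>)"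
    using kc unfolding kernel_cond_def by blast
  have chi4': "\<bar>(1 / u) * (\<Sum>\<^sub>\<infinity>k. K (w * x - t k) u) - 1\<bar> \<le> max C 1 * w powr (- \<theta>)"
    if "W \<le> w" "u \<noteq> 0" for w x u
    by (rule order_trans[OF chi4[OF that]]) (simp add: mult_right_mono)
  obtain R where R: "\<And>x. max R 1 < \<bar>x\<bar> \<Longrightarrow> L x = 0"
    using supp by force
  obtain C\<^sub>H where C\<^sub>H: "0 < C\<^sub>H" "\<And>u. 0 \<le> u \<Longrightarrow> \<phi> (C\<^sub>H * \<psi> u) \<le> \<eta> ((1/2) * u)"
    using H[unfolded condH_def, THEN conjunct2, rule_format, of "1/2"] by auto
  have m: "\<And>u F. finite F \<Longrightarrow> (\<Sum>k\<in>F. L (u - t k)) \<le> m0 t L"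
    using finite_sum_le_m0[OF m0 K(2)] .
  then have "0 \<le> m0 t L" using m[of "{}"] by simp
  define \<mu> where "\<mu> = C\<^sub>H / (3 * (m0 t L + 1))"
  have \<mu>: "0 < \<mu>" "3 * \<mu> * m0 t L \<le> C\<^sub>H"
    using C\<^sub>H \<open>0 \<le> m0 t L\<close> by (auto simp: \<mu>_def field_simps)
  show thesis
    using ss K R L1 m p\<phi> cv\<phi> p\<eta> cv\<eta> C\<^sub>H \<mu> chi4' g
    by (intro that[of "max R 1" "max C 1" W C\<^sub>H \<mu>] sampling_kantorovich.intro) (auto simp: L1_cond_def)
qed

theorem corollary3p1:
  fixes t :: "int \<Rightarrow> real" and \<delta> \<Delta> \<theta>\<^sub>0 :: real
    and K :: "real \<Rightarrow> real \<Rightarrow> real" and L \<psi> \<phi> \<eta> f :: "real \<Rightarrow> real"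
  assumes "sampling_sequence t \<delta> \<Delta>"
    and "kernel_cond t K L \<psi> \<theta>\<^sub>0"
    and "L1_cond L" and "L2_cond t L" and "m0_finite t L"
    and "\<exists>R. \<forall>x. \<bar>x\<bar> > R \<longrightarrow> L x = 0"
    and "phi_function \<phi>" and "convex_on {0..} \<phi>"
    and "condH \<phi> \<psi> \<eta>" and "phi_function \<eta>" and "convex_on {0..} \<eta>"
    and "f \<in> orlicz_space (\<lambda>u. \<phi> u + \<eta> u)"
  shows "\<forall>\<alpha>. 0 < \<alpha> \<and> \<alpha> < 1 \<longrightarrow>
    (\<exists>\<mu>>0. \<exists>lam0>0. \<exists>lam>0. \<forall>\<^sub>F w in at_top.
       modular \<phi> (\<lambda>x. \<mu> * (S_op t K w f x - f x))
       \<le> ennreal ((LINT x|lebesgue. L x) / (3 * \<delta> * m0 t L)) * modulus \<eta> lam f (1 / w powr \<alpha>)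
         + ennreal (\<Delta> / (3 * \<delta>)) * modulus \<eta> lam f (\<Delta> / w)
         + modular \<phi> (\<lambda>x. lam0 * f x) / 3 * ennreal (w powr (- \<theta>\<^sub>0)))"
proof -
  obtain g where g: "g \<in> borel_measurable borel" "AE x in lborel. f x = g x"
    "\<And>a b. set_integrable lborel {a..b} g"
    using orlicz_space_borel_representative[OF assms(12,7,8,10)] by blast
  obtain R C W C\<^sub>H \<mu> where S: "sampling_kantorovich t \<delta> \<Delta> \<theta>\<^sub>0 K L \<psi> \<phi> \<eta> g R C W C\<^sub>H \<mu> (m0 t L)"
    using sampling_kantorovich_setting[OF assms(1-3,5-11) g(1,3)] .
  have ae: "AE x in lebesgue. f x = g x" by (rule AE_completion[OF g(2)])
  have "f \<in> borel_measurable lebesgue" using assms(12) by (simp add: orlicz_space_def)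
  moreover have "g \<in> borel_measurable lebesgue" by (rule measurable_completion) (simp add: g(1))
  ultimately have S_eq: "S_op t K w f = S_op t K w g" for w using ae by (rule S_op_cong_AE)
  have "modular \<phi> (\<lambda>x. c * (S_op t K w f x - f x)) = modular \<phi> (\<lambda>x. c * (S_op t K w g x - g x))"
    "modular \<phi> (\<lambda>x. c * f x) = modular \<phi> (\<lambda>x. c * g x)" for c w
    using ae by (auto simp: S_eq intro!: modular_cong_AE elim!: eventually_mono)
  moreover have "modulus \<eta> c f d = modulus \<eta> c g d" for c d
    by (rule modulus_cong_AE[OF g(2)])
  ultimately show ?thesis
    using sampling_kantorovich.modular_S_op_diff_estimate[OF S] by simp
qed

end
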